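(* Let $\mathbb{K}\subset\mathbb{K}'$ be an algebraically pure field extension where $\mathbb{K}$ is $\aleph_0$-complete. Let $x=(x_1,\ldots,x_n)$, $Y=(Y_1,\ldots,Y_m)$ and $f\in\mathbb{K}[\![x]\!][Y]^r$. Assume that there exists a solution $\hat y\in\mathbb{K}'[\![x]\!]^m$ of $f=0$ such that $\hat y_i\in\mathbb{K}'[\![x_{J_i}]\!]$ for some subsets $J_i\subset\{1,\ldots,n\}$, $i=1,\ldots,m$. Then there is a solution $y\in\mathbb{K}[\![x]\!]^m$ of $f=0$ such that $y_i\in\mathbb{K}[\![x_{J_i}]\!]$ and $\mathrm{ord}(y_i)=\mathrm{ord}(\hat y_i)$ for all $i=1,\ldots,m$.
   Context: A field extension $\mathbb{K}\subset\mathbb{K}'$ is algebraically pure if every finite system of polynomial equations with coefficients in $\mathbb{K}$ that has a solution in $\mathbb{K}'$ has a solution in $\mathbb{K}$. A field $\mathbb{K}$ is called $\aleph_0$-complete if every countable system $\mathcal S$ of polynomial equations with coefficients in $\mathbb{K}$ (in a countable number of indeterminates) has a solution in $\mathbb{K}$ if and only if every finite sub-system of $\mathcal S$ has a solution in $\mathbb{K}$. For a field $L$ and $J\subset\{1,\ldots,n\}$, $L[\![x_J]\!]$ denotes the ring of formal power series in the variables $x_j$, $j\in J$, viewed inside $L[\![x]\!]$. For a power series $g$, $\mathrm{ord}(g)$ is the smallest total degree of a monomial appearing in $g$ with nonzero coefficient ($\mathrm{ord}(0)=\infty$). *)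

theory Defs
  imports Main "HOL-Library.Extended_Nat" "HOL-Library.Countable_Set"
begin

definition subfield :: "'a::field set \<Rightarrow> bool" where
  "subfield K \<longleftrightarrow> 0 \<in> K \<and> 1 \<in> K \<and>
     (\<forall>a\<in>K. \<forall>b\<in>K. a + b \<in> K \<and> a * b \<in> K) \<and>
     (\<forall>a\<in>K. - a \<in> K \<and> inverse a \<in> K)"

text \<open>A polynomial in the indeterminates z_0, z_1, ... (countably many) with coefficients in K:
  a coefficient function on exponent vectors, with finitely many nonzero coefficients,
  each exponent vector finitely supported.\<close>
definition is_poly :: "'a::field set \<Rightarrow> ((nat \<Rightarrow> nat) \<Rightarrow> 'a) \<Rightarrow> bool" where
  "is_poly K p \<longleftrightarrow> (\<forall>\<alpha>. p \<alpha> \<in> K) \<and> finite {\<alpha>. p \<alpha> \<noteq> 0} \<and>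
     (\<forall>\<alpha>. p \<alpha> \<noteq> 0 \<longrightarrow> finite {i. \<alpha> i \<noteq> 0})"

definition poly_eval :: "((nat \<Rightarrow> nat) \<Rightarrow> 'a::field) \<Rightarrow> (nat \<Rightarrow> 'a) \<Rightarrow> 'a" where
  "poly_eval p v = (\<Sum>\<alpha>\<in>{\<alpha>. p \<alpha> \<noteq> 0}. p \<alpha> * (\<Prod>i\<in>{i. \<alpha> i \<noteq> 0}. v i ^ \<alpha> i))"

text \<open>The extension K \<subseteq> K' is modelled with K' the ambient field type.\<close>
definition alg_pure :: "'a::field set \<Rightarrow> bool" where
  "alg_pure K \<longleftrightarrow> (\<forall>P. finite P \<and> (\<forall>p\<in>P. is_poly K p) \<and> (\<exists>v. \<forall>p\<in>P. poly_eval p v = 0)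
      \<longrightarrow> (\<exists>v. (\<forall>i. v i \<in> K) \<and> (\<forall>p\<in>P. poly_eval p v = 0)))"

definition aleph0_complete :: "'a::field set \<Rightarrow> bool" where
  "aleph0_complete K \<longleftrightarrow> (\<forall>S. countable S \<and> (\<forall>p\<in>S. is_poly K p) \<longrightarrow>
      ((\<exists>v. (\<forall>i. v i \<in> K) \<and> (\<forall>p\<in>S. poly_eval p v = 0)) \<longleftrightarrow>
       (\<forall>F. F \<subseteq> S \<and> finite F \<longrightarrow> (\<exists>v. (\<forall>i. v i \<in> K) \<and> (\<forall>p\<in>F. poly_eval p v = 0)))))"

type_synonym 'a mps = "(nat \<Rightarrow> nat) \<Rightarrow> 'a"

definition mps :: "nat \<Rightarrow> 'a::field set \<Rightarrow> 'a mps set" where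
  "mps n K = {f. (\<forall>\<alpha>. f \<alpha> \<in> K) \<and> (\<forall>\<alpha>. f \<alpha> \<noteq> 0 \<longrightarrow> (\<forall>i\<ge>n. \<alpha> i = 0))}"

definition mps_in_vars :: "nat set \<Rightarrow> 'a::field mps \<Rightarrow> bool" where
  "mps_in_vars J f \<longleftrightarrow> (\<forall>\<alpha>. f \<alpha> \<noteq> 0 \<longrightarrow> (\<forall>i. \<alpha> i \<noteq> 0 \<longrightarrow> i \<in> J))"

definition mps_zero :: "'a::field mps" where
  "mps_zero = (\<lambda>_. 0)"

definition mps_one :: "'a::field mps" where
  "mps_one = (\<lambda>\<alpha>. if \<alpha> = (\<lambda>_. 0) then 1 else 0)"

definition mps_times :: "'a::field mps \<Rightarrow> 'a mps \<Rightarrow> 'a mps" where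
  "mps_times f g = (\<lambda>\<alpha>. \<Sum>\<beta>\<in>{\<beta>. \<forall>i. \<beta> i \<le> \<alpha> i}. f \<beta> * g (\<lambda>i. \<alpha> i - \<beta> i))"

primrec mps_pow :: "'a::field mps \<Rightarrow> nat \<Rightarrow> 'a mps" where
  "mps_pow f 0 = mps_one"
| "mps_pow f (Suc k) = mps_times f (mps_pow f k)"

definition mps_monom :: "nat \<Rightarrow> (nat \<Rightarrow> 'a::field mps) \<Rightarrow> (nat \<Rightarrow> nat) \<Rightarrow> 'a mps" where
  "mps_monom m y \<gamma> = foldr (\<lambda>j acc. mps_times (mps_pow (y j) (\<gamma> j)) acc) [0..<m] mps_one"

definition is_Ypoly :: "nat \<Rightarrow> nat \<Rightarrow> 'a::field set \<Rightarrow> ((nat \<Rightarrow> nat) \<Rightarrow> 'a mps) \<Rightarrow> bool" where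
  "is_Ypoly n m K c \<longleftrightarrow> finite {\<gamma>. c \<gamma> \<noteq> mps_zero} \<and>
     (\<forall>\<gamma>. c \<gamma> \<in> mps n K) \<and>
     (\<forall>\<gamma>. c \<gamma> \<noteq> mps_zero \<longrightarrow> (\<forall>j\<ge>m. \<gamma> j = 0))"

definition eval_Y :: "nat \<Rightarrow> ((nat \<Rightarrow> nat) \<Rightarrow> 'a::field mps) \<Rightarrow> (nat \<Rightarrow> 'a mps) \<Rightarrow> 'a mps" where
  "eval_Y m c y = (\<lambda>\<alpha>. \<Sum>\<gamma>\<in>{\<gamma>. c \<gamma> \<noteq> mps_zero}. mps_times (c \<gamma>) (mps_monom m y \<gamma>) \<alpha>)"

definition mps_ord :: "'a::field mps \<Rightarrow> enat" where
  "mps_ord f = (if f = mps_zero then \<infinity>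
     else enat (LEAST d. \<exists>\<alpha>. f \<alpha> \<noteq> 0 \<and> (\<Sum>i\<in>{i. \<alpha> i \<noteq> 0}. \<alpha> i) = d))"

end

theory Submission
  imports Defs
begin

text \<open>Write every unknown series y_i generically, with one unknown for each coefficient of an
  admissible monomial (one in the variables x_j, j \<in> J_i). The equations f = 0, the vanishing of
  the coefficients of y_i in degrees below ord(yhat_i), and the invertibility of the coefficient
  of one fixed monomial of lowest degree of yhat_i (through an extra unknown w_i with w_i c_i = 1)
  form a countable polynomial system over K in these unknowns: each equation involves only
  finitely many of them, because a coefficient of a product of series is a finite sum. The
  coefficients of yhat solve this system in K'. By purity every finite subsystem is solvable in K,
  so by aleph_0-completeness the whole system is, and its solution defines the required y.\<close>

section \<open>Polynomial functions over a subfield\<close>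

lemma subfield_zero: "subfield K \<Longrightarrow> 0 \<in> K"
  and subfield_one: "subfield K \<Longrightarrow> 1 \<in> K"
  and subfield_add: "subfield K \<Longrightarrow> a \<in> K \<Longrightarrow> b \<in> K \<Longrightarrow> a + b \<in> K"
  and subfield_mult: "subfield K \<Longrightarrow> a \<in> K \<Longrightarrow> b \<in> K \<Longrightarrow> a * b \<in> K"
  and subfield_uminus: "subfield K \<Longrightarrow> a \<in> K \<Longrightarrow> - a \<in> K"
  unfolding subfield_def by auto

lemma subfield_sum:
  assumes "subfield K" "\<forall>x\<in>A. g x \<in> K"
  shows "sum g A \<in> K"
  using assms(2)
  by (induction A rule: infinite_finite_induct)
     (auto intro: subfield_zero subfield_add assms(1))

definition monomial_value :: "(nat \<Rightarrow> nat) \<Rightarrow> (nat \<Rightarrow> 'a::field) \<Rightarrow> 'a" where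
  "monomial_value \<alpha> v = (\<Prod>i\<in>{i. \<alpha> i \<noteq> 0}. v i ^ \<alpha> i)"

lemma monomial_value_superset:
  assumes "finite S" "{i. \<alpha> i \<noteq> 0} \<subseteq> S"
  shows "monomial_value \<alpha> v = (\<Prod>i\<in>S. v i ^ \<alpha> i)"
  unfolding monomial_value_def by (rule prod.mono_neutral_left[OF assms]) auto

lemma monomial_value_add:
  assumes "finite {i. \<alpha> i \<noteq> 0}" "finite {i. \<beta> i \<noteq> 0}"
  shows "monomial_value (\<lambda>i. \<alpha> i + \<beta> i) v = monomial_value \<alpha> v * monomial_value \<beta> v"
proof -
  let ?S = "{i. \<alpha> i \<noteq> 0} \<union> {i. \<beta> i \<noteq> 0}"
  have "monomial_value (\<lambda>i. \<alpha> i + \<beta> i) v = (\<Prod>i\<in>?S. v i ^ (\<alpha> i + \<beta> i))"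
    by (rule monomial_value_superset) (use assms in auto)
  also have "\<dots> = (\<Prod>i\<in>?S. v i ^ \<alpha> i) * (\<Prod>i\<in>?S. v i ^ \<beta> i)"
    by (simp add: power_add prod.distrib)
  also have "\<dots> = monomial_value \<alpha> v * monomial_value \<beta> v"
    using monomial_value_superset[of ?S \<alpha> v] monomial_value_superset[of ?S \<beta> v] assms by auto
  finally show ?thesis .
qed

lemma poly_eval_superset:
  assumes "finite S" "{\<alpha>. p \<alpha> \<noteq> 0} \<subseteq> S"
  shows "poly_eval p v = (\<Sum>\<alpha>\<in>S. p \<alpha> * monomial_value \<alpha> v)"
  unfolding poly_eval_def monomial_value_def[symmetric]
  by (rule sum.mono_neutral_left[OF assms]) auto

definition poly_mult :: "((nat \<Rightarrow> nat) \<Rightarrow> 'a) \<Rightarrow> ((nat \<Rightarrow> nat) \<Rightarrow> 'a) \<Rightarrow> (nat \<Rightarrow> nat) \<Rightarrow> 'a::field"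
  where "poly_mult p q \<gamma> =
    (\<Sum>x\<in>{x \<in> {\<alpha>. p \<alpha> \<noteq> 0} \<times> {\<beta>. q \<beta> \<noteq> 0}. (\<lambda>i. fst x i + snd x i) = \<gamma>}. p (fst x) * q (snd x))"

lemma poly_mult_support:
  "{\<gamma>. poly_mult p q \<gamma> \<noteq> 0} \<subseteq> (\<lambda>x i. fst x i + snd x i) ` ({\<alpha>. p \<alpha> \<noteq> 0} \<times> {\<beta>. q \<beta> \<noteq> 0})"
proof
  fix \<gamma> assume "\<gamma> \<in> {\<gamma>. poly_mult p q \<gamma> \<noteq> 0}"
  then have "{x \<in> {\<alpha>. p \<alpha> \<noteq> 0} \<times> {\<beta>. q \<beta> \<noteq> 0}. (\<lambda>i. fst x i + snd x i) = \<gamma>} \<noteq> {}"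
    unfolding poly_mult_def by force
  then show "\<gamma> \<in> (\<lambda>x i. fst x i + snd x i) ` ({\<alpha>. p \<alpha> \<noteq> 0} \<times> {\<beta>. q \<beta> \<noteq> 0})" by blast
qed

lemma is_poly_mult:
  assumes K: "subfield K" and p: "is_poly K p" and q: "is_poly K q"
  shows "is_poly K (poly_mult p q)"
  unfolding is_poly_def
proof (intro conjI allI impI)
  show "poly_mult p q \<gamma> \<in> K" for \<gamma>
    unfolding poly_mult_def
    by (rule subfield_sum[OF K]) (use p q in \<open>auto intro: subfield_mult[OF K] simp: is_poly_def\<close>)
  have "finite ({\<alpha>. p \<alpha> \<noteq> 0} \<times> {\<beta>. q \<beta> \<noteq> 0})"
    using p q unfolding is_poly_def by auto
  then show "finite {\<gamma>. poly_mult p q \<gamma> \<noteq> 0}"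
    using poly_mult_support by (rule finite_subset[rotated, OF finite_imageI])
  show "finite {i. \<gamma> i \<noteq> 0}" if "poly_mult p q \<gamma> \<noteq> 0" for \<gamma>
  proof -
    have "\<gamma> \<in> (\<lambda>x i. fst x i + snd x i) ` ({\<alpha>. p \<alpha> \<noteq> 0} \<times> {\<beta>. q \<beta> \<noteq> 0})"
      using that poly_mult_support by blast
    then obtain \<alpha> \<beta> where "p \<alpha> \<noteq> 0" "q \<beta> \<noteq> 0" "\<gamma> = (\<lambda>i. \<alpha> i + \<beta> i)"
      by auto
    then show ?thesis
      using p q unfolding is_poly_def by (auto intro: finite_subset[of _ "{i. \<alpha> i \<noteq> 0} \<union> {i. \<beta> i \<noteq> 0}"])
  qed
qed

lemma poly_eval_mult:
  assumes p: "is_poly K p" and q: "is_poly K q"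
  shows "poly_eval (poly_mult p q) v = poly_eval p v * poly_eval q v"
proof -
  define Sp where "Sp = {\<alpha>. p \<alpha> \<noteq> 0}"
  define Sq where "Sq = {\<beta>. q \<beta> \<noteq> 0}"
  define add :: "(nat \<Rightarrow> nat) \<times> (nat \<Rightarrow> nat) \<Rightarrow> nat \<Rightarrow> nat" where "add x = (\<lambda>i. fst x i + snd x i)" for x
  have fin: "finite Sp" "finite Sq" using p q unfolding is_poly_def Sp_def Sq_def by auto
  have fin_supp: "\<forall>\<alpha>\<in>Sp \<union> Sq. finite {i. \<alpha> i \<noteq> 0}"
    using p q unfolding is_poly_def Sp_def Sq_def by auto
  have "poly_eval p v * poly_eval q v
      = (\<Sum>\<alpha>\<in>Sp. p \<alpha> * monomial_value \<alpha> v) * (\<Sum>\<beta>\<in>Sq. q \<beta> * monomial_value \<beta> v)"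
    using poly_eval_superset[OF fin(1), of p] poly_eval_superset[OF fin(2), of q]
    by (simp add: Sp_def Sq_def)
  also have "\<dots> = (\<Sum>\<alpha>\<in>Sp. \<Sum>\<beta>\<in>Sq. p \<alpha> * q \<beta> * monomial_value (add (\<alpha>, \<beta>)) v)"
    unfolding sum_product using fin_supp
    by (intro sum.cong refl) (simp add: add_def monomial_value_add)
  also have "\<dots> = (\<Sum>x\<in>Sp \<times> Sq. p (fst x) * q (snd x) * monomial_value (add x) v)"
    by (simp add: sum.cartesian_product case_prod_beta')
  also have "\<dots> = (\<Sum>\<gamma>\<in>add ` (Sp \<times> Sq). \<Sum>x\<in>{x \<in> Sp \<times> Sq. add x = \<gamma>}.
                    p (fst x) * q (snd x) * monomial_value (add x) v)"
    by (rule sum.group[symmetric]) (use fin in auto)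
  also have "\<dots> = (\<Sum>\<gamma>\<in>add ` (Sp \<times> Sq). poly_mult p q \<gamma> * monomial_value \<gamma> v)"
    unfolding poly_mult_def sum_distrib_right Sp_def Sq_def add_def
    by (intro sum.cong refl) auto
  also have "\<dots> = poly_eval (poly_mult p q) v"
    by (subst poly_eval_superset[OF _ poly_mult_support]) (use fin in \<open>auto simp: Sp_def Sq_def add_def\<close>)
  finally show ?thesis ..
qed

definition poly_function :: "'a::field set \<Rightarrow> ((nat \<Rightarrow> 'a) \<Rightarrow> 'a) \<Rightarrow> bool" where
  "poly_function K F \<longleftrightarrow> (\<exists>p. is_poly K p \<and> (\<forall>v. F v = poly_eval p v))"

lemma poly_function_const:
  assumes K: "subfield K" and c: "c \<in> K"
  shows "poly_function K (\<lambda>v. c)"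
proof -
  define p :: "(nat \<Rightarrow> nat) \<Rightarrow> 'a" where "p \<alpha> = (if \<alpha> = (\<lambda>_. 0) then c else 0)" for \<alpha>
  have "is_poly K p"
    unfolding is_poly_def p_def using c subfield_zero[OF K]
    by (auto intro: finite_subset[of _ "{\<lambda>_. 0}"])
  moreover have "poly_eval p v = c" for v
    by (subst poly_eval_superset[of "{\<lambda>_. 0}"]) (auto simp: p_def monomial_value_def)
  ultimately show ?thesis unfolding poly_function_def by metis
qed

lemma poly_function_var:
  assumes K: "subfield K"
  shows "poly_function K (\<lambda>v. v j)"
proof -
  define e :: "nat \<Rightarrow> nat" where "e i = (if i = j then 1 else 0)" for i
  define p :: "(nat \<Rightarrow> nat) \<Rightarrow> 'a" where "p \<alpha> = (if \<alpha> = e then 1 else 0)" for \<alpha>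
  have "is_poly K p"
    unfolding is_poly_def p_def using subfield_zero[OF K] subfield_one[OF K]
    by (auto intro: finite_subset[of _ "{e}"] simp: e_def)
  moreover have "poly_eval p v = v j" for v
  proof -
    have "poly_eval p v = monomial_value e v"
      using poly_eval_superset[of "{e}" p v] by (simp add: p_def)
    also have "\<dots> = (\<Prod>i\<in>{j}. v i ^ e i)" by (rule monomial_value_superset) (auto simp: e_def)
    finally show ?thesis by (simp add: e_def)
  qed
  ultimately show ?thesis unfolding poly_function_def by metis
qed

lemma poly_function_add:
  assumes K: "subfield K" and "poly_function K F" "poly_function K G"
  shows "poly_function K (\<lambda>v. F v + G v)"
proof -
  obtain p q where p: "is_poly K p" "\<forall>v. F v = poly_eval p v"
    and q: "is_poly K q" "\<forall>v. G v = poly_eval q v"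
    using assms(2,3) unfolding poly_function_def by blast
  let ?S = "{\<alpha>. p \<alpha> \<noteq> 0} \<union> {\<alpha>. q \<alpha> \<noteq> 0}"
  have fin: "finite ?S" using p(1) q(1) unfolding is_poly_def by auto
  have sub: "{\<alpha>. p \<alpha> + q \<alpha> \<noteq> 0} \<subseteq> ?S" by auto
  have "is_poly K (\<lambda>\<alpha>. p \<alpha> + q \<alpha>)"
    unfolding is_poly_def
  proof (intro conjI allI impI)
    show "p \<alpha> + q \<alpha> \<in> K" for \<alpha>
      using p(1) q(1) subfield_add[OF K] unfolding is_poly_def by auto
    show "finite {\<alpha>. p \<alpha> + q \<alpha> \<noteq> 0}" using sub fin by (rule finite_subset)
    show "finite {i. \<alpha> i \<noteq> 0}" if "p \<alpha> + q \<alpha> \<noteq> 0" for \<alpha>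
      using that p(1) q(1) unfolding is_poly_def by (cases "p \<alpha> = 0") auto
  qed
  moreover have "F v + G v = poly_eval (\<lambda>\<alpha>. p \<alpha> + q \<alpha>) v" for v
    using p(2) q(2) poly_eval_superset[OF fin, of p] poly_eval_superset[OF fin, of q]
      poly_eval_superset[OF fin sub]
    by (auto simp: sum.distrib distrib_right)
  ultimately show ?thesis unfolding poly_function_def by blast
qed

lemma poly_function_mult:
  assumes K: "subfield K" and "poly_function K F" "poly_function K G"
  shows "poly_function K (\<lambda>v. F v * G v)"
  using assms is_poly_mult[OF K] poly_eval_mult unfolding poly_function_def by metis

lemma poly_function_sum:
  assumes K: "subfield K" and "\<forall>x\<in>A. poly_function K (F x)"
  shows "poly_function K (\<lambda>v. \<Sum>x\<in>A. F x v)"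
  using assms(2)
  by (induction A rule: infinite_finite_induct)
     (auto intro: poly_function_add[OF K] poly_function_const[OF K] subfield_zero[OF K])

lemma poly_function_diff:
  assumes K: "subfield K" and "poly_function K F" "poly_function K G"
  shows "poly_function K (\<lambda>v. F v - G v)"
proof -
  have "poly_function K (\<lambda>v. F v + (- 1) * G v)"
    by (intro poly_function_add[OF K] poly_function_mult[OF K] assms poly_function_const[OF K]
        subfield_uminus[OF K] subfield_one[OF K])
  then show ?thesis by simp
qed

section \<open>Power series whose coefficients are polynomial functions\<close>

definition coeffwise_poly_function :: "'a::field set \<Rightarrow> ((nat \<Rightarrow> 'a) \<Rightarrow> 'a mps) \<Rightarrow> bool" where
  "coeffwise_poly_function K F \<longleftrightarrow> (\<forall>\<alpha>. poly_function K (\<lambda>v. F v \<alpha>))"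

lemma coeffwise_poly_function_const:
  "subfield K \<Longrightarrow> \<forall>\<alpha>. c \<alpha> \<in> K \<Longrightarrow> coeffwise_poly_function K (\<lambda>v. c)"
  unfolding coeffwise_poly_function_def using poly_function_const by blast

lemma coeffwise_poly_function_one:
  "subfield K \<Longrightarrow> coeffwise_poly_function K (\<lambda>v. mps_one)"
  by (rule coeffwise_poly_function_const) (simp_all add: mps_one_def subfield_zero subfield_one)

lemma coeffwise_poly_function_times:
  assumes "subfield K" "coeffwise_poly_function K F" "coeffwise_poly_function K G"
  shows "coeffwise_poly_function K (\<lambda>v. mps_times (F v) (G v))"
  using assms unfolding coeffwise_poly_function_def mps_times_def
  by (auto intro!: poly_function_sum poly_function_mult)

lemma coeffwise_poly_function_pow:
  "subfield K \<Longrightarrow> coeffwise_poly_function K F \<Longrightarrow> coeffwise_poly_function K (\<lambda>v. mps_pow (F v) k)"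
  by (induction k) (auto intro: coeffwise_poly_function_one coeffwise_poly_function_times)

lemma coeffwise_poly_function_monom:
  assumes K: "subfield K" and Y: "\<forall>j<m. coeffwise_poly_function K (\<lambda>v. Y v j)"
  shows "coeffwise_poly_function K (\<lambda>v. mps_monom m (Y v) \<gamma>)"
proof -
  have "coeffwise_poly_function K
          (\<lambda>v. foldr (\<lambda>j acc. mps_times (mps_pow (Y v j) (\<gamma> j)) acc) xs mps_one)"
    if "set xs \<subseteq> {..<m}" for xs
    using that
  proof (induction xs)
    case Nil
    then show ?case by (simp add: coeffwise_poly_function_one[OF K])
  next
    case (Cons j xs)
    then show ?case
      by (simp, intro coeffwise_poly_function_times[OF K] coeffwise_poly_function_pow[OF K])
        (auto intro: Y[rule_format])
  qed
  from this[of "[0..<m]"] show ?thesis by (simp add: mps_monom_def atLeast0LessThan)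
qed

lemma poly_function_eval_Y:
  assumes K: "subfield K" and c: "\<forall>\<gamma> \<alpha>. c \<gamma> \<alpha> \<in> K"
    and Y: "\<forall>j<m. coeffwise_poly_function K (\<lambda>v. Y v j)"
  shows "poly_function K (\<lambda>v. eval_Y m c (Y v) \<alpha>)"
proof -
  have "coeffwise_poly_function K (\<lambda>v. mps_times (c \<gamma>) (mps_monom m (Y v) \<gamma>))" for \<gamma>
    using c by (intro coeffwise_poly_function_times[OF K] coeffwise_poly_function_const[OF K]
        coeffwise_poly_function_monom[OF K Y]) auto
  then show ?thesis
    unfolding eval_Y_def coeffwise_poly_function_def by (intro poly_function_sum[OF K]) auto
qed

lemma mps_times_mem_mps:
  assumes f: "f \<in> mps n UNIV" and g: "g \<in> mps n UNIV"
  shows "mps_times f g \<in> mps n UNIV"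
  unfolding mps_def
proof (intro CollectI conjI allI impI UNIV_I)
  fix \<alpha> i assume nz: "mps_times f g \<alpha> \<noteq> 0" and i: "n \<le> i"
  show "\<alpha> i = 0"
  proof (rule ccontr)
    assume "\<alpha> i \<noteq> 0"
    have "f \<beta> * g (\<lambda>i. \<alpha> i - \<beta> i) = 0" for \<beta>
    proof (cases "\<beta> i = 0")
      case True
      with \<open>\<alpha> i \<noteq> 0\<close> have "g (\<lambda>i. \<alpha> i - \<beta> i) = 0"
        using g i unfolding mps_def by force
      then show ?thesis by simp
    next
      case False
      then show ?thesis using f i unfolding mps_def by force
    qed
    then have "mps_times f g \<alpha> = 0" unfolding mps_times_def by (intro sum.neutral) simp
    with nz show False ..
  qed
qed

lemma mps_one_mem_mps: "mps_one \<in> mps n UNIV"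
  unfolding mps_def mps_one_def by auto

lemma mps_pow_mem_mps: "f \<in> mps n UNIV \<Longrightarrow> mps_pow f k \<in> mps n UNIV"
  by (induction k) (auto intro: mps_one_mem_mps mps_times_mem_mps)

lemma mps_monom_mem_mps:
  assumes "\<forall>j<m. y j \<in> mps n UNIV"
  shows "mps_monom m y \<gamma> \<in> mps n UNIV"
proof -
  have "foldr (\<lambda>j acc. mps_times (mps_pow (y j) (\<gamma> j)) acc) xs mps_one \<in> mps n UNIV"
    if "set xs \<subseteq> {..<m}" for xs
    using that assms
    by (induction xs) (auto intro: mps_one_mem_mps mps_times_mem_mps mps_pow_mem_mps)
  from this[of "[0..<m]"] show ?thesis by (simp add: mps_monom_def atLeast0LessThan)
qed

lemma eval_Y_mem_mps:
  assumes "\<forall>\<gamma>. c \<gamma> \<in> mps n UNIV" "\<forall>j<m. y j \<in> mps n UNIV"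
  shows "eval_Y m c y \<in> mps n UNIV"
proof -
  have "mps_times (c \<gamma>) (mps_monom m y \<gamma>) \<in> mps n UNIV" for \<gamma>
    using assms by (intro mps_times_mem_mps mps_monom_mem_mps) auto
  then have "mps_times (c \<gamma>) (mps_monom m y \<gamma>) \<alpha> = 0" if "n \<le> i" "\<alpha> i \<noteq> 0" for \<gamma> \<alpha> i
    using that unfolding mps_def by fastforce
  then have "eval_Y m c y \<alpha> = 0" if "n \<le> i" "\<alpha> i \<noteq> 0" for \<alpha> i
    unfolding eval_Y_def using that by simp
  then show ?thesis unfolding mps_def by (auto intro: ccontr)
qed

lemma eval_Y_cong:
  assumes "\<forall>j<m. y j = y' j"
  shows "eval_Y m c y = eval_Y m c y'"
proof -
  have "mps_monom m y \<gamma> = mps_monom m y' \<gamma>" for \<gamma>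
    unfolding mps_monom_def by (rule foldr_cong) (use assms in auto)
  then show ?thesis unfolding eval_Y_def by simp
qed

definition total_degree :: "(nat \<Rightarrow> nat) \<Rightarrow> nat" where
  "total_degree \<alpha> = (\<Sum>i\<in>{i. \<alpha> i \<noteq> 0}. \<alpha> i)"

lemma mps_ord_le: "g \<alpha> \<noteq> 0 \<Longrightarrow> mps_ord g \<le> enat (total_degree \<alpha>)"
  unfolding mps_ord_def total_degree_def mps_zero_def
  by (auto intro: Least_le)

lemma mps_ord_attained:
  assumes "g \<noteq> mps_zero"
  shows "\<exists>\<alpha>. g \<alpha> \<noteq> 0 \<and> enat (total_degree \<alpha>) = mps_ord g"
proof -
  obtain \<beta> where "g \<beta> \<noteq> 0" using assms unfolding mps_zero_def by auto
  then have "\<exists>d \<alpha>. g \<alpha> \<noteq> 0 \<and> total_degree \<alpha> = d" by blast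
  note LeastI_ex[OF this]
  then show ?thesis using assms unfolding mps_ord_def total_degree_def by simp
qed

lemma mps_ord_eqI:
  assumes low: "\<forall>\<alpha>. enat (total_degree \<alpha>) < e \<longrightarrow> g \<alpha> = 0"
    and attained: "e \<noteq> \<infinity> \<Longrightarrow> \<exists>\<alpha>. g \<alpha> \<noteq> 0 \<and> enat (total_degree \<alpha>) = e"
  shows "mps_ord g = e"
proof (cases e)
  case (enat d)
  then obtain \<beta> where \<beta>: "g \<beta> \<noteq> 0" "total_degree \<beta> = d" using attained by auto
  then have "g \<noteq> mps_zero" unfolding mps_zero_def by auto
  moreover have "(LEAST d. \<exists>\<alpha>. g \<alpha> \<noteq> 0 \<and> total_degree \<alpha> = d) = d"
  proof (rule Least_equality)
    show "\<exists>\<alpha>. g \<alpha> \<noteq> 0 \<and> total_degree \<alpha> = d" using \<beta> by blast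
    show "d \<le> d'" if "\<exists>\<alpha>. g \<alpha> \<noteq> 0 \<and> total_degree \<alpha> = d'" for d'
      using that low enat by (metis enat_ord_simps(2) not_le)
  qed
  ultimately show ?thesis using enat unfolding mps_ord_def total_degree_def by simp
next
  case infinity
  then have "g = mps_zero" using low unfolding mps_zero_def by auto
  then show ?thesis using infinity by (simp add: mps_ord_def)
qed

definition lowest_exponent :: "'a::field mps \<Rightarrow> nat \<Rightarrow> nat" where
  "lowest_exponent g = (SOME \<alpha>. g \<alpha> \<noteq> 0 \<and> enat (total_degree \<alpha>) = mps_ord g)"

lemma lowest_exponent:
  assumes "g \<noteq> mps_zero"
  shows "g (lowest_exponent g) \<noteq> 0 \<and> enat (total_degree (lowest_exponent g)) = mps_ord g"
  unfolding lowest_exponent_def using mps_ord_attained[OF assms] by (rule someI_ex)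

lemma countable_system_solvable_in_subfield:
  assumes pure: "alg_pure K" and complete: "aleph0_complete K"
    and S: "countable S" "\<forall>F\<in>S. poly_function K F" and zero: "\<forall>F\<in>S. F v0 = 0"
  shows "\<exists>v. (\<forall>j. v j \<in> K) \<and> (\<forall>F\<in>S. F v = 0)"
proof -
  define P where "P F = (SOME p. is_poly K p \<and> (\<forall>v. F v = poly_eval p v))" for F
  have P: "is_poly K (P F) \<and> (\<forall>v. F v = poly_eval (P F) v)" if "F \<in> S" for F
    using someI_ex[of "\<lambda>p. is_poly K p \<and> (\<forall>v. F v = poly_eval p v)"] S(2) that
    unfolding P_def poly_function_def by blast
  have "\<exists>v. (\<forall>j. v j \<in> K) \<and> (\<forall>p\<in>Q. poly_eval p v = 0)" if "Q \<subseteq> P ` S" "finite Q" for Q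
  proof -
    have "\<forall>p\<in>Q. poly_eval p v0 = 0" using that(1) P zero by auto
    then show ?thesis using pure[unfolded alg_pure_def, rule_format, of Q] that P by blast
  qed
  then obtain v where "\<forall>j. v j \<in> K" "\<forall>p\<in>P ` S. poly_eval p v = 0"
    using complete[unfolded aleph0_complete_def, rule_format, of "P ` S"] S(1) P by auto
  then show ?thesis using P by auto
qed

section \<open>The system of coefficient equations\<close>

definition exps_below :: "nat \<Rightarrow> (nat \<Rightarrow> nat) set" where
  "exps_below n = {\<alpha>. \<forall>j\<ge>n. \<alpha> j = 0}"

definition exponent_of_list :: "nat \<Rightarrow> nat list \<Rightarrow> nat \<Rightarrow> nat" where
  "exponent_of_list n xs j = (if j < n \<and> j < length xs then xs ! j else 0)"

lemma exponent_of_list_map: "\<alpha> \<in> exps_below n \<Longrightarrow> exponent_of_list n (map \<alpha> [0..<n]) = \<alpha>"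
  by (auto simp: exps_below_def exponent_of_list_def fun_eq_iff)

lemma countable_exps_below: "countable (exps_below n)"
proof -
  have "exps_below n \<subseteq> range (exponent_of_list n)"
    using exponent_of_list_map by (metis image_eqI rangeI subsetI)
  then show ?thesis by (rule countable_subset) simp
qed

text \<open>The unknowns are numbered by \<^const>\<open>to_nat\<close>: one for each coefficient \<alpha> of y_i, with
  \<alpha> \<in> exps_below n recorded by its first n entries, and one for each inverse w_i.\<close>

definition coeff_var :: "nat \<Rightarrow> nat \<Rightarrow> (nat \<Rightarrow> nat) \<Rightarrow> nat" where
  "coeff_var n i \<alpha> = to_nat (Inl (i, map \<alpha> [0..<n]) :: (nat \<times> nat list) + nat)"

definition inv_var :: "nat \<Rightarrow> nat" where
  "inv_var i = to_nat (Inr i :: (nat \<times> nat list) + nat)"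

locale solution_over_extension =
  fixes K :: "'a::field set" and n m r :: nat
    and f :: "nat \<Rightarrow> (nat \<Rightarrow> nat) \<Rightarrow> 'a mps"
    and J :: "nat \<Rightarrow> nat set" and yhat :: "nat \<Rightarrow> 'a mps"
  assumes subfield: "subfield K"
    and f_poly: "\<forall>k<r. is_Ypoly n m K (f k)"
    and yhat_series: "\<forall>i<m. yhat i \<in> mps n UNIV \<and> mps_in_vars (J i) (yhat i)"
    and yhat_solves: "\<forall>k<r. eval_Y m (f k) yhat = mps_zero"
begin

definition admissible :: "nat \<Rightarrow> (nat \<Rightarrow> nat) \<Rightarrow> bool" where
  "admissible i \<alpha> \<longleftrightarrow> (\<forall>j. \<alpha> j \<noteq> 0 \<longrightarrow> j \<in> J i \<and> j < n)"

definition series_of_vars :: "(nat \<Rightarrow> 'a) \<Rightarrow> nat \<Rightarrow> 'a mps" where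
  "series_of_vars v i \<alpha> = (if admissible i \<alpha> then v (coeff_var n i \<alpha>) else 0)"

definition system :: "((nat \<Rightarrow> 'a) \<Rightarrow> 'a) set" where
  "system =
     (\<Union>k<r. \<Union>\<alpha>\<in>exps_below n. {\<lambda>v. eval_Y m (f k) (series_of_vars v) \<alpha>}) \<union>
     (\<Union>i<m. (\<lambda>\<alpha> v. v (coeff_var n i \<alpha>)) `
        {\<alpha>. admissible i \<alpha> \<and> enat (total_degree \<alpha>) < mps_ord (yhat i)}) \<union>
     (\<lambda>i v. v (inv_var i) * v (coeff_var n i (lowest_exponent (yhat i))) - 1) `
        {i. i < m \<and> yhat i \<noteq> mps_zero}"

definition vars_of_yhat :: "nat \<Rightarrow> 'a" where
  "vars_of_yhat t = (case from_nat t :: (nat \<times> nat list) + nat of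
     Inl (i, xs) \<Rightarrow> yhat i (exponent_of_list n xs)
   | Inr i \<Rightarrow> inverse (yhat i (lowest_exponent (yhat i))))"

lemma admissible_exps_below: "admissible i \<alpha> \<Longrightarrow> \<alpha> \<in> exps_below n"
  unfolding admissible_def exps_below_def by auto

lemma yhat_admissible:
  assumes i: "i < m" and nz: "yhat i \<alpha> \<noteq> 0"
  shows "admissible i \<alpha>"
  unfolding admissible_def
proof (intro allI impI conjI)
  fix j assume j: "\<alpha> j \<noteq> 0"
  show "j \<in> J i" using yhat_series i nz j unfolding mps_in_vars_def by blast
  show "j < n"
  proof (rule ccontr)
    assume "\<not> j < n"
    then show False using yhat_series i nz j unfolding mps_def by auto
  qed
qed

lemma system_memI:
  "k < r \<Longrightarrow> \<alpha> \<in> exps_below n \<Longrightarrow> (\<lambda>v. eval_Y m (f k) (series_of_vars v) \<alpha>) \<in> system"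
  "i < m \<Longrightarrow> admissible i \<alpha> \<Longrightarrow> enat (total_degree \<alpha>) < mps_ord (yhat i)
     \<Longrightarrow> (\<lambda>v. v (coeff_var n i \<alpha>)) \<in> system"
  "i < m \<Longrightarrow> yhat i \<noteq> mps_zero
     \<Longrightarrow> (\<lambda>v. v (inv_var i) * v (coeff_var n i (lowest_exponent (yhat i))) - 1) \<in> system"
  unfolding system_def by blast+

lemma countable_system: "countable system"
  unfolding system_def
  by (intro countable_UN countable_Un countable_image countable_subset[OF _ countable_exps_below])
     (auto dest: admissible_exps_below)

lemma poly_function_system: "\<forall>F\<in>system. poly_function K F"
proof -
  have "poly_function K (\<lambda>v. series_of_vars v j \<alpha>)" for j \<alpha>
    unfolding series_of_vars_def
    by (cases "admissible j \<alpha>")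
       (simp_all add: poly_function_var[OF subfield] poly_function_const[OF subfield] subfield_zero[OF subfield])
  then have vars: "\<forall>j<m. coeffwise_poly_function K (\<lambda>v. series_of_vars v j)"
    unfolding coeffwise_poly_function_def by blast
  have "\<forall>\<gamma> \<alpha>. f k \<gamma> \<alpha> \<in> K" if "k < r" for k
    using f_poly that unfolding is_Ypoly_def mps_def by auto
  then show ?thesis
    unfolding system_def using subfield
    by (auto intro!: poly_function_eval_Y[OF subfield _ vars] poly_function_diff poly_function_mult
        poly_function_var poly_function_const subfield_one)
qed

lemma series_of_vars_yhat: "i < m \<Longrightarrow> series_of_vars vars_of_yhat i = yhat i"
  unfolding series_of_vars_def vars_of_yhat_def coeff_var_def
  by (auto simp: fun_eq_iff exponent_of_list_map admissible_exps_below dest: yhat_admissible)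

lemma system_vanishes_at_yhat: "\<forall>F\<in>system. F vars_of_yhat = 0"
proof -
  have "eval_Y m (f k) (series_of_vars vars_of_yhat) = mps_zero" if "k < r" for k
    using eval_Y_cong[of m "series_of_vars vars_of_yhat" yhat] series_of_vars_yhat yhat_solves that
    by simp
  moreover have "yhat i \<alpha> = 0" if "enat (total_degree \<alpha>) < mps_ord (yhat i)" for i \<alpha>
    using mps_ord_le that by (metis leD)
  moreover have "inverse (yhat i (lowest_exponent (yhat i)))
      * yhat i (exponent_of_list n (map (lowest_exponent (yhat i)) [0..<n])) = 1"
    if "i < m" "yhat i \<noteq> mps_zero" for i
  proof -
    let ?\<alpha> = "lowest_exponent (yhat i)"
    have "yhat i ?\<alpha> \<noteq> 0" using lowest_exponent[OF that(2)] ..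
    moreover from this have "exponent_of_list n (map ?\<alpha> [0..<n]) = ?\<alpha>"
      by (intro exponent_of_list_map admissible_exps_below[of i] yhat_admissible[OF that(1)])
    ultimately show ?thesis by simp
  qed
  ultimately show ?thesis
    unfolding system_def vars_of_yhat_def coeff_var_def inv_var_def
    by (auto simp: mps_zero_def exponent_of_list_map admissible_exps_below)
qed

context
  fixes v :: "nat \<Rightarrow> 'a"
  assumes v_in_K: "\<forall>j. v j \<in> K" and v_solves: "\<forall>F\<in>system. F v = 0"
begin

lemma series_of_vars_mem_mps: "series_of_vars v i \<in> mps n K \<and> mps_in_vars (J i) (series_of_vars v i)"
  using v_in_K subfield_zero[OF subfield]
  unfolding mps_def mps_in_vars_def series_of_vars_def admissible_def by auto

lemma mps_ord_series_of_vars: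
  assumes i: "i < m"
  shows "mps_ord (series_of_vars v i) = mps_ord (yhat i)"
proof (rule mps_ord_eqI)
  show "\<forall>\<alpha>. enat (total_degree \<alpha>) < mps_ord (yhat i) \<longrightarrow> series_of_vars v i \<alpha> = 0"
  proof (intro allI impI)
    fix \<alpha> assume low: "enat (total_degree \<alpha>) < mps_ord (yhat i)"
    show "series_of_vars v i \<alpha> = 0"
    proof (cases "admissible i \<alpha>")
      case True
      then show ?thesis
        using bspec[OF v_solves system_memI(2)[OF i True low]] unfolding series_of_vars_def by simp
    qed (simp add: series_of_vars_def)
  qed
next
  assume "mps_ord (yhat i) \<noteq> \<infinity>"
  then have nz: "yhat i \<noteq> mps_zero" by (auto simp: mps_ord_def)
  let ?\<alpha> = "lowest_exponent (yhat i)"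
  have "v (inv_var i) * v (coeff_var n i ?\<alpha>) = 1"
    using bspec[OF v_solves system_memI(3)[OF i nz]] by simp
  moreover have "admissible i ?\<alpha>"
    using yhat_admissible[OF i conjunct1[OF lowest_exponent[OF nz]]] .
  ultimately have "series_of_vars v i ?\<alpha> \<noteq> 0" unfolding series_of_vars_def by auto
  then show "\<exists>\<alpha>. series_of_vars v i \<alpha> \<noteq> 0 \<and> enat (total_degree \<alpha>) = mps_ord (yhat i)"
    using lowest_exponent[OF nz] by blast
qed

lemma series_of_vars_solves:
  assumes k: "k < r"
  shows "eval_Y m (f k) (series_of_vars v) = mps_zero"
proof
  fix \<alpha>
  show "eval_Y m (f k) (series_of_vars v) \<alpha> = mps_zero \<alpha>"
  proof (cases "\<alpha> \<in> exps_below n")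
    case True
    then show ?thesis using bspec[OF v_solves system_memI(1)[OF k True]] by (simp add: mps_zero_def)
  next
    case False
    have "\<forall>\<gamma>. f k \<gamma> \<in> mps n UNIV" using f_poly k unfolding is_Ypoly_def mps_def by auto
    moreover have "\<forall>j<m. series_of_vars v j \<in> mps n UNIV"
      unfolding mps_def series_of_vars_def admissible_def by auto
    ultimately have "eval_Y m (f k) (series_of_vars v) \<in> mps n UNIV" by (rule eval_Y_mem_mps)
    then show ?thesis using False unfolding mps_def exps_below_def mps_zero_def by auto
  qed
qed

end

end

theorem theorem3p5:
  fixes K :: "'a::field set" and n m r :: nat
    and f :: "nat \<Rightarrow> (nat \<Rightarrow> nat) \<Rightarrow> 'a mps"
    and J :: "nat \<Rightarrow> nat set" and yhat :: "nat \<Rightarrow> 'a mps"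
  assumes "subfield K" and "alg_pure K" and "aleph0_complete K"
    and "\<forall>k<r. is_Ypoly n m K (f k)"
    and "\<forall>i<m. J i \<subseteq> {0..<n}"
    and "\<forall>i<m. yhat i \<in> mps n UNIV \<and> mps_in_vars (J i) (yhat i)"
    and "\<forall>k<r. eval_Y m (f k) yhat = mps_zero"
  shows "\<exists>y. (\<forall>i<m. y i \<in> mps n K \<and> mps_in_vars (J i) (y i) \<and> mps_ord (y i) = mps_ord (yhat i))
             \<and> (\<forall>k<r. eval_Y m (f k) y = mps_zero)"
proof -
  interpret solution_over_extension K n m r f J yhat
    using assms(1,4,6,7) by unfold_locales
  obtain v where v: "\<forall>j. v j \<in> K" "\<forall>F\<in>system. F v = 0"
    using countable_system_solvable_in_subfield[OF assms(2,3) countable_system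
        poly_function_system system_vanishes_at_yhat] by blast
  show ?thesis
    using series_of_vars_mem_mps[OF v] mps_ord_series_of_vars[OF v] series_of_vars_solves[OF v]
    by (intro exI[of _ "series_of_vars v"]) auto
qed

end
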